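(* Let $V$ be a finite-dimensional vector space over $\Bbbk$ and let $\mathcal E\subset\operatorname{End}(V)$ be a linear subspace which is a semigroup (closed under composition and containing $\mathrm{id}_V$). Then $\mathcal E(v)=M(v)=\mathcal D_{\mathcal E}(v)$ for all $v\in V$. In particular, a closed subvariety $Y\subset V$ is $\mathcal D_{\mathcal E}$-invariant if and only if it is $\mathcal E$-stable. Moreover, $\mathcal E(w)=\mathcal E(v)$ for all $w$ in an open neighborhood of $v$ in $\mathcal E(v)$.
   Context: $\Bbbk$ is algebraically closed of characteristic $0$. $\operatorname{End}(V)$ is the set of all polynomial maps $V\to V$. Vector fields on $V$ are identified with polynomial maps $\xi\colon V\to V$, $\xi(v)\in V=T_vV$. $\mathcal D_{\mathcal E}$ is the set of vector fields $v\mapsto\phi(v)$ for $\phi\in\mathcal E$, and $\mathcal D_{\mathcal E}(v)=\{\xi(v)\mid\xi\in\mathcal D_{\mathcal E}\}\subset V$. A closed subvariety $Y\subset V$ is $\mathcal D_{\mathcal E}$-invariant if $\xi(y)\in T_yY$ for all $y\in Y$ and $\xi\in\mathcal D_{\mathcal E}$; $M(v)$ is the smallest closed $\mathcal D_{\mathcal E}$-invariant subvariety containing $v$. $\mathcal E(v)=\{\phi(v)\mid\phi\in\mathcal E\}$; $Y$ is $\mathcal E$-stable if $\phi(Y)\subset Y$ for all $\phi\in\mathcal E$. *)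

theory Defs
  imports "HOL-Computational_Algebra.Polynomial"
begin

text \<open>V is modelled as k^n, i.e. functions 'n \<Rightarrow> 'k for a finite index type 'n.\<close>

definition alg_closed :: "'k::field itself \<Rightarrow> bool" where
  "alg_closed _ \<longleftrightarrow> (\<forall>p::'k poly. degree p > 0 \<longrightarrow> (\<exists>x. poly p x = 0))"

inductive_set poly_fun :: "(('n \<Rightarrow> 'k::comm_ring_1) \<Rightarrow> 'k) set" where
  const: "(\<lambda>v. c) \<in> poly_fun"
| coord: "(\<lambda>v. v i) \<in> poly_fun"
| add: "f \<in> poly_fun \<Longrightarrow> g \<in> poly_fun \<Longrightarrow> (\<lambda>v. f v + g v) \<in> poly_fun"
| mult: "f \<in> poly_fun \<Longrightarrow> g \<in> poly_fun \<Longrightarrow> (\<lambda>v. f v * g v) \<in> poly_fun"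

text \<open>Polynomial maps V \<rightarrow> V (the set End(V)).\<close>
definition poly_maps :: "(('n \<Rightarrow> 'k::comm_ring_1) \<Rightarrow> ('n \<Rightarrow> 'k)) set" where
  "poly_maps = {\<phi>. \<forall>i. (\<lambda>v. \<phi> v i) \<in> poly_fun}"

definition zariski_closed :: "('n \<Rightarrow> 'k::comm_ring_1) set \<Rightarrow> bool" where
  "zariski_closed Y \<longleftrightarrow> (\<exists>F \<subseteq> poly_fun. Y = {v. \<forall>f\<in>F. f v = 0})"

definition zariski_open_in :: "('n \<Rightarrow> 'k::comm_ring_1) set \<Rightarrow> ('n \<Rightarrow> 'k) set \<Rightarrow> bool" where
  "zariski_open_in Y U \<longleftrightarrow> U \<subseteq> Y \<and> (\<exists>Z. zariski_closed Z \<and> U = Y - Z)"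

definition dir_deriv :: "(('n \<Rightarrow> 'k::field_char_0) \<Rightarrow> 'k) \<Rightarrow> ('n \<Rightarrow> 'k) \<Rightarrow> ('n \<Rightarrow> 'k) \<Rightarrow> 'k" where
  "dir_deriv f y w = coeff (THE p. \<forall>t. poly p t = f (\<lambda>i. y i + t * w i)) 1"

definition tangent_space :: "('n \<Rightarrow> 'k::field_char_0) set \<Rightarrow> ('n \<Rightarrow> 'k) \<Rightarrow> ('n \<Rightarrow> 'k) set" where
  "tangent_space Y y = {w. \<forall>f\<in>poly_fun. (\<forall>x\<in>Y. f x = 0) \<longrightarrow> dir_deriv f y w = 0}"

definition semigroup_subspace :: "(('n \<Rightarrow> 'k::comm_ring_1) \<Rightarrow> ('n \<Rightarrow> 'k)) set \<Rightarrow> bool" where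
  "semigroup_subspace E \<longleftrightarrow> E \<subseteq> poly_maps \<and> (\<lambda>v. (\<lambda>i. 0)) \<in> E
     \<and> (\<forall>\<phi>\<in>E. \<forall>\<psi>\<in>E. (\<lambda>v. (\<lambda>i. \<phi> v i + \<psi> v i)) \<in> E)
     \<and> (\<forall>\<phi>\<in>E. \<forall>c. (\<lambda>v. (\<lambda>i. c * \<phi> v i)) \<in> E)
     \<and> (\<forall>\<phi>\<in>E. \<forall>\<psi>\<in>E. \<phi> \<circ> \<psi> \<in> E) \<and> id \<in> E"

definition vfields :: "(('n \<Rightarrow> 'k) \<Rightarrow> ('n \<Rightarrow> 'k)) set \<Rightarrow> (('n \<Rightarrow> 'k) \<Rightarrow> ('n \<Rightarrow> 'k)) set" where
  "vfields E = {\<xi>. \<exists>\<phi>\<in>E. \<xi> = (\<lambda>v. \<phi> v)}"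

definition vfields_at :: "(('n \<Rightarrow> 'k) \<Rightarrow> ('n \<Rightarrow> 'k)) set \<Rightarrow> ('n \<Rightarrow> 'k) \<Rightarrow> ('n \<Rightarrow> 'k) set" where
  "vfields_at E v = {\<xi> v | \<xi>. \<xi> \<in> vfields E}"

definition orbit_E :: "(('n \<Rightarrow> 'k) \<Rightarrow> ('n \<Rightarrow> 'k)) set \<Rightarrow> ('n \<Rightarrow> 'k) \<Rightarrow> ('n \<Rightarrow> 'k) set" where
  "orbit_E E v = {\<phi> v | \<phi>. \<phi> \<in> E}"

definition D_invariant :: "(('n \<Rightarrow> 'k::field_char_0) \<Rightarrow> ('n \<Rightarrow> 'k)) set \<Rightarrow> ('n \<Rightarrow> 'k) set \<Rightarrow> bool" where
  "D_invariant E Y \<longleftrightarrow> zariski_closed Y \<and> (\<forall>y\<in>Y. \<forall>\<xi>\<in>vfields E. \<xi> y \<in> tangent_space Y y)"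

definition E_stable :: "(('n \<Rightarrow> 'k) \<Rightarrow> ('n \<Rightarrow> 'k)) set \<Rightarrow> ('n \<Rightarrow> 'k) set \<Rightarrow> bool" where
  "E_stable E Y \<longleftrightarrow> (\<forall>\<phi>\<in>E. \<phi> ` Y \<subseteq> Y)"

definition is_M :: "(('n \<Rightarrow> 'k::field_char_0) \<Rightarrow> ('n \<Rightarrow> 'k)) set \<Rightarrow> ('n \<Rightarrow> 'k) \<Rightarrow> ('n \<Rightarrow> 'k) set \<Rightarrow> bool" where
  "is_M E v Y \<longleftrightarrow> D_invariant E Y \<and> v \<in> Y \<and> (\<forall>Z. D_invariant E Z \<and> v \<in> Z \<longrightarrow> Y \<subseteq> Z)"

end

theory Submission
  imports Defs "HOL-Library.Function_Algebras" "Jordan_Normal_Form.Determinant"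
begin

text \<open>
  \<open>E(v)\<close> is a linear subspace, hence Zariski closed, and it is \<open>E\<close>-stable because \<open>E\<close> is a
  semigroup. An \<open>E\<close>-stable closed set is \<open>D\<^sub>E\<close>-invariant because the lines \<open>y + t \<phi>(y)\<close> are the
  images of \<open>y\<close> under \<open>id + t \<phi> \<in> E\<close>.

  Conversely let \<open>Z\<close> be \<open>D\<^sub>E\<close>-invariant and \<open>f\<close> vanish on \<open>Z\<close>. By induction on \<open>d\<close>, every
  function \<open>x \<mapsto> D\<^bsub>\<phi>\<^sub>1(x)\<^esub> \<cdots> D\<^bsub>\<phi>\<^sub>d(x)\<^esub> f (x)\<close> with \<open>\<phi>\<^sub>i \<in> E\<close> vanishes on \<open>Z\<close>: differentiating
  the case \<open>d\<close> along the field \<open>\<psi> \<in> E\<close> gives the case \<open>d + 1\<close> plus terms in which one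
  \<open>\<phi>\<^sub>i(x)\<close> is replaced by \<open>d\<phi>\<^sub>i(x) \<psi>(x)\<close>; the latter again lies in \<open>E(x)\<close>, being a
  coefficient of the polynomial curve \<open>t \<mapsto> \<phi>\<^sub>i(x + t \<psi>(x))\<close> in \<open>E(x)\<close>. Taking all
  \<open>\<phi>\<^sub>i = \<psi> = \<phi> - id\<close>, Taylor's formula gives \<open>f(\<phi>(x)) = f(x + \<psi>(x)) = 0\<close>.

  Finally, if \<open>\<phi>\<^sub>1(v), \<dots>, \<phi>\<^sub>m(v)\<close> is a basis of \<open>E(v)\<close>, the determinant of the coordinates of
  \<open>\<phi>\<^sub>1(w), \<dots>, \<phi>\<^sub>m(w)\<close> is a polynomial in \<open>w\<close> that does not vanish at \<open>v\<close>. Where it does not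
  vanish, \<open>v\<close> is a linear combination of the \<open>\<phi>\<^sub>j(w)\<close>, so \<open>v \<in> E(w)\<close> and \<open>E(w) = E(v)\<close>.
\<close>

section \<open>Directional derivatives of polynomial functions\<close>

declare poly_fun.intros[intro]

lemma poly_fun_restrict_line:
  assumes "f \<in> poly_fun"
  shows "\<exists>p. \<forall>t. poly p t = f (\<lambda>i. y i + t * w i)"
  using assms
proof induction
  case (const c) show ?case by (rule exI[of _ "[:c:]"]) simp
next
  case (coord i) show ?case by (rule exI[of _ "[:y i, w i:]"]) (simp add: mult.commute)
next
  case (add f g)
  then obtain p q where "\<forall>t. poly p t = f (\<lambda>i. y i + t * w i)" "\<forall>t. poly q t = g (\<lambda>i. y i + t * w i)"
    by blast
  thus ?case by (intro exI[of _ "p + q"]) simp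
next
  case (mult f g)
  then obtain p q where "\<forall>t. poly p t = f (\<lambda>i. y i + t * w i)" "\<forall>t. poly q t = g (\<lambda>i. y i + t * w i)"
    by blast
  thus ?case by (intro exI[of _ "p * q"]) simp
qed

lemma poly_fun_compose:
  assumes "f \<in> poly_fun" "\<forall>i. (\<lambda>z. A z i) \<in> poly_fun"
  shows "(\<lambda>z. f (A z)) \<in> poly_fun"
  using assms(1) by induction (use assms(2) in auto)

lemma poly_fun_sum:
  assumes "\<forall>s\<in>S. F s \<in> poly_fun"
  shows "(\<lambda>v. \<Sum>s\<in>S. F s v) \<in> poly_fun"
proof (cases "finite S")
  case True thus ?thesis using assms by (induction S rule: finite_induct) auto
qed auto

lemma poly_fun_prod:
  assumes "\<forall>s\<in>S. F s \<in> poly_fun"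
  shows "(\<lambda>v. \<Prod>s\<in>S. F s v) \<in> poly_fun"
proof (cases "finite S")
  case True thus ?thesis using assms by (induction S rule: finite_induct) auto
qed auto

lemma dir_deriv_eqI:
  fixes g :: "('v \<Rightarrow> 'k::field_char_0) \<Rightarrow> 'k"
  assumes "\<forall>t. poly p t = g (\<lambda>i. y i + t * w i)"
  shows "dir_deriv g y w = coeff p 1"
proof -
  have "(THE p. \<forall>t. poly p t = g (\<lambda>i. y i + t * w i)) = p"
  proof (rule the_equality)
    fix q assume "\<forall>t. poly q t = g (\<lambda>i. y i + t * w i)"
    with assms have "poly q = poly p" by auto
    thus "q = p" using poly_eq_poly_eq_iff by blast
  qed (use assms in auto)
  thus ?thesis by (simp add: dir_deriv_def)
qed

lemma dir_deriv_cong_line: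
  assumes "\<forall>t. g (\<lambda>i. y i + t * w i) = h (\<lambda>i. y' i + t * w' i)"
  shows "dir_deriv g y w = dir_deriv h y' w'"
  unfolding dir_deriv_def using assms by simp

lemma coeff_mult_1:
  "coeff (p * q) (Suc 0) = coeff p 0 * coeff q (Suc 0) + coeff p (Suc 0) * coeff q 0"
  by (simp add: coeff_mult atMost_Suc ac_simps)

lemma dir_deriv_const [simp]: "dir_deriv (\<lambda>v. c) y w = (0::'k::field_char_0)"
  by (subst dir_deriv_eqI[of "[:c:]"]) auto

lemma dir_deriv_coord [simp]: "dir_deriv (\<lambda>v. v i) y w = (w i::'k::field_char_0)"
  by (subst dir_deriv_eqI[of "[:y i, w i:]"]) (auto simp: mult.commute)

lemma dir_deriv_add:
  fixes f g :: "('v \<Rightarrow> 'k::field_char_0) \<Rightarrow> 'k"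
  assumes "f \<in> poly_fun" "g \<in> poly_fun"
  shows "dir_deriv (\<lambda>v. f v + g v) y w = dir_deriv f y w + dir_deriv g y w"
proof -
  obtain p q where p: "\<forall>t. poly p t = f (\<lambda>i. y i + t * w i)"
    and q: "\<forall>t. poly q t = g (\<lambda>i. y i + t * w i)"
    using poly_fun_restrict_line assms by metis
  have pq: "\<forall>t. poly (p + q) t = f (\<lambda>i. y i + t * w i) + g (\<lambda>i. y i + t * w i)"
    using p q by simp
  show ?thesis using dir_deriv_eqI[OF pq] dir_deriv_eqI[OF p] dir_deriv_eqI[OF q] by simp
qed

lemma dir_deriv_mult:
  fixes f g :: "('v \<Rightarrow> 'k::field_char_0) \<Rightarrow> 'k"
  assumes "f \<in> poly_fun" "g \<in> poly_fun"
  shows "dir_deriv (\<lambda>v. f v * g v) y w = f y * dir_deriv g y w + dir_deriv f y w * g y"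
proof -
  obtain p q where p: "\<forall>t. poly p t = f (\<lambda>i. y i + t * w i)"
    and q: "\<forall>t. poly q t = g (\<lambda>i. y i + t * w i)"
    using poly_fun_restrict_line assms by metis
  have pq: "\<forall>t. poly (p * q) t = f (\<lambda>i. y i + t * w i) * g (\<lambda>i. y i + t * w i)"
    using p q by simp
  have "f y = coeff p 0" "g y = coeff q 0" using p q by (auto simp: poly_0_coeff_0[symmetric])
  thus ?thesis using dir_deriv_eqI[OF pq] dir_deriv_eqI[OF p] dir_deriv_eqI[OF q]
    by (simp add: coeff_mult_1)
qed

lemma dir_deriv_linear_direction:
  fixes f :: "('v \<Rightarrow> 'k::field_char_0) \<Rightarrow> 'k"
  assumes "f \<in> poly_fun"
  shows "dir_deriv f y (\<lambda>i. a * u i + w i) = a * dir_deriv f y u + dir_deriv f y w"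
  using assms by induction (auto simp: dir_deriv_add dir_deriv_mult algebra_simps)

lemma dir_deriv_sum:
  fixes F :: "'s \<Rightarrow> ('v \<Rightarrow> 'k::field_char_0) \<Rightarrow> 'k"
  assumes "finite S" "\<forall>s\<in>S. F s \<in> poly_fun"
  shows "dir_deriv (\<lambda>v. \<Sum>s\<in>S. F s v) y w = (\<Sum>s\<in>S. dir_deriv (F s) y w)"
  using assms
proof (induction S rule: finite_induct)
  case (insert s S)
  have "(\<lambda>v. \<Sum>s\<in>S. F s v) \<in> poly_fun" using insert poly_fun_sum by auto
  thus ?case using insert by (simp add: dir_deriv_add)
qed simp

lemma poly_fun_dir_deriv:
  fixes f :: "('v \<Rightarrow> 'k::field_char_0) \<Rightarrow> 'k"
  assumes "f \<in> poly_fun" "\<forall>i. (\<lambda>z. A z i) \<in> poly_fun" "\<forall>i. (\<lambda>z. B z i) \<in> poly_fun"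
  shows "(\<lambda>z. dir_deriv f (A z) (B z)) \<in> poly_fun"
  using assms(1)
proof induction
  case (add f g) thus ?case by (simp add: dir_deriv_add poly_fun.add)
next
  case (mult f g)
  have "(\<lambda>z. f (A z)) \<in> poly_fun" "(\<lambda>z. g (A z)) \<in> poly_fun"
    using poly_fun_compose mult assms by auto
  thus ?case using mult by (simp add: dir_deriv_mult poly_fun.add poly_fun.mult)
qed (use assms in auto)

lemma poly_fun_dir_deriv_vfield:
  fixes f :: "('v \<Rightarrow> 'k::field_char_0) \<Rightarrow> 'k"
  assumes "f \<in> poly_fun" "\<forall>i. (\<lambda>z. B z i) \<in> poly_fun"
  shows "(\<lambda>z. dir_deriv f z (B z)) \<in> poly_fun"
  using poly_fun_dir_deriv[OF assms(1), of "\<lambda>z. z" B] assms(2) by auto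

lemma poly_fun_dir_deriv_const_dir:
  fixes f :: "('v \<Rightarrow> 'k::field_char_0) \<Rightarrow> 'k"
  assumes "f \<in> poly_fun"
  shows "(\<lambda>z. dir_deriv f z a) \<in> poly_fun"
  using poly_fun_dir_deriv_vfield[OF assms, of "\<lambda>z. a"] by auto

lemma dir_deriv_commute:
  fixes f :: "('v \<Rightarrow> 'k::field_char_0) \<Rightarrow> 'k"
  assumes "f \<in> poly_fun"
  shows "dir_deriv (\<lambda>y. dir_deriv f y a) x b = dir_deriv (\<lambda>y. dir_deriv f y b) x a"
  using assms
proof induction
  case (add f g) thus ?case by (simp add: dir_deriv_add poly_fun_dir_deriv_const_dir)
next
  case (mult f g)
  thus ?case
    by (simp add: dir_deriv_add dir_deriv_mult poly_fun_dir_deriv_const_dir poly_fun.mult algebra_simps)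
qed auto

lemma dir_deriv_variable_direction:
  fixes f :: "('v \<Rightarrow> 'k::field_char_0) \<Rightarrow> 'k"
  assumes "f \<in> poly_fun" "\<forall>i. (\<lambda>y. A y i) \<in> poly_fun"
  shows "dir_deriv (\<lambda>y. dir_deriv f y (A y)) x b
     = dir_deriv (\<lambda>y. dir_deriv f y (A x)) x b + dir_deriv f x (\<lambda>i. dir_deriv (\<lambda>y. A y i) x b)"
  using assms(1)
proof induction
  case (add f g)
  thus ?case using assms(2) by (simp add: dir_deriv_add poly_fun_dir_deriv_const_dir poly_fun_dir_deriv_vfield)
next
  case (mult f g)
  thus ?case using assms(2)
    by (simp add: dir_deriv_add dir_deriv_mult poly_fun_dir_deriv_const_dir poly_fun_dir_deriv_vfield
        poly_fun.mult algebra_simps)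
qed (use assms in auto)

subsection \<open>Taylor's formula along a line\<close>

fun dir_deriv_pow :: "nat \<Rightarrow> ('v \<Rightarrow> 'k::field_char_0) \<Rightarrow> (('v \<Rightarrow> 'k) \<Rightarrow> 'k) \<Rightarrow> ('v \<Rightarrow> 'k) \<Rightarrow> 'k"
  where
    "dir_deriv_pow 0 w f = f"
  | "dir_deriv_pow (Suc d) w f = (\<lambda>y. dir_deriv (dir_deriv_pow d w f) y w)"

lemma coeff_pcompose_shift_1:
  "coeff (pcompose q [:s, 1:]) (Suc 0) = poly (pderiv q) (s::'k::field_char_0)"
proof (induction q)
  case (pCons a q)
  have "coeff (pcompose (pCons a q) [:s, 1:]) (Suc 0)
      = s * coeff (pcompose q [:s, 1:]) (Suc 0) + coeff (pcompose q [:s, 1:]) 0"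
    by (simp add: pcompose_pCons coeff_mult_1)
  also have "coeff (pcompose q [:s, 1:]) 0 = poly q s"
    by (simp add: poly_0_coeff_0[symmetric] poly_pcompose)
  finally show ?case using pCons by (simp add: pderiv_pCons algebra_simps)
qed simp

lemma dir_deriv_pow_line:
  assumes "\<forall>t. poly p t = f (\<lambda>i. y i + t * w i)"
  shows "dir_deriv_pow d w f (\<lambda>i. y i + s * w i) = poly ((pderiv ^^ d) p) s"
proof (induction d arbitrary: s)
  case 0 thus ?case using assms by simp
next
  case (Suc d)
  have "dir_deriv_pow (Suc d) w f (\<lambda>i. y i + s * w i)
      = coeff (pcompose ((pderiv ^^ d) p) [:s, 1:]) 1"
  proof (simp only: dir_deriv_pow.simps, rule dir_deriv_eqI, rule allI)
    fix t
    have "(\<lambda>i. y i + s * w i + t * w i) = (\<lambda>i. y i + (s + t) * w i)" by (simp add: algebra_simps)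
    thus "poly (pcompose ((pderiv ^^ d) p) [:s, 1:]) t = dir_deriv_pow d w f (\<lambda>i. y i + s * w i + t * w i)"
      using Suc by (simp add: poly_pcompose)
  qed
  thus ?case by (simp add: coeff_pcompose_shift_1)
qed

lemma zero_if_all_dir_deriv_pow_zero:
  fixes f :: "('v \<Rightarrow> 'k::field_char_0) \<Rightarrow> 'k"
  assumes "f \<in> poly_fun" "\<forall>d. dir_deriv_pow d w f y = 0"
  shows "f (\<lambda>i. y i + w i) = 0"
proof -
  obtain p where p: "\<forall>t. poly p t = f (\<lambda>i. y i + t * w i)"
    using poly_fun_restrict_line assms(1) by blast
  have "coeff p d = 0" for d
  proof -
    have "dir_deriv_pow d w f (\<lambda>i. y i + 0 * w i) = 0" using assms(2) by simp
    hence "poly ((pderiv ^^ d) p) 0 = 0" using dir_deriv_pow_line[OF p] by metis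
    hence "pochhammer 1 d * coeff p d = (0::'k)"
      by (simp add: poly_0_coeff_0 coeff_higher_pderiv)
    moreover have "pochhammer 1 d \<noteq> (0::'k)"
      by (simp add: pochhammer_fact[symmetric])
    ultimately show ?thesis by simp
  qed
  hence "p = 0" by (simp add: poly_eqI)
  thus ?thesis using p[rule_format, of 1] by simp
qed

section \<open>Iterated derivatives along vector fields\<close>

text \<open>
  A point \<open>z\<close> of \<open>V \<oplus> V\<close>, encoded as \<open>'v + 'v \<Rightarrow> 'k\<close>, stands for a pair \<open>(y, x)\<close>, and
  \<open>derivs_along f [\<phi>\<^sub>1, \<dots>, \<phi>\<^sub>d] (y, x) = D\<^bsub>\<phi>\<^sub>1(x)\<^esub> \<cdots> D\<^bsub>\<phi>\<^sub>d(x)\<^esub> f (y)\<close>. Separating the point of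
  differentiation from the base point of the fields makes this a polynomial function again.
\<close>

definition lift_vfield :: "(('v \<Rightarrow> 'k) \<Rightarrow> ('v \<Rightarrow> 'k)) \<Rightarrow> ('v + 'v \<Rightarrow> 'k) \<Rightarrow> ('v + 'v \<Rightarrow> 'k::zero)"
  where "lift_vfield \<phi> z = case_sum (\<phi> (\<lambda>j. z (Inr j))) (\<lambda>j. 0)"

fun derivs_along ::
    "(('v \<Rightarrow> 'k::field_char_0) \<Rightarrow> 'k) \<Rightarrow> (('v \<Rightarrow> 'k) \<Rightarrow> ('v \<Rightarrow> 'k)) list \<Rightarrow> ('v + 'v \<Rightarrow> 'k) \<Rightarrow> 'k"
  where
    "derivs_along f [] = (\<lambda>z. f (\<lambda>j. z (Inl j)))"
  | "derivs_along f (\<phi> # \<phi>s) = (\<lambda>z. dir_deriv (derivs_along f \<phi>s) z (lift_vfield \<phi> z))"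

definition map_deriv :: "('v \<Rightarrow> 'k::field_char_0) \<Rightarrow> (('v \<Rightarrow> 'k) \<Rightarrow> ('v \<Rightarrow> 'k)) \<Rightarrow> ('v \<Rightarrow> 'k) \<Rightarrow> ('v \<Rightarrow> 'k)"
  where "map_deriv u \<phi> = (\<lambda>x k. dir_deriv (\<lambda>x'. \<phi> x' k) x u)"

lemma map_deriv_poly_maps: "\<phi> \<in> poly_maps \<Longrightarrow> map_deriv u \<phi> \<in> poly_maps"
  unfolding poly_maps_def map_deriv_def using poly_fun_dir_deriv_const_dir by auto

lemma poly_fun_lift_vfield:
  fixes \<phi> :: "('v \<Rightarrow> 'k::comm_ring_1) \<Rightarrow> ('v \<Rightarrow> 'k)"
  assumes "\<phi> \<in> poly_maps"
  shows "\<forall>i. (\<lambda>z. lift_vfield \<phi> z i) \<in> poly_fun"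
proof
  fix i :: "'v + 'v"
  show "(\<lambda>z. lift_vfield \<phi> z i) \<in> poly_fun"
  proof (cases i)
    case (Inl j)
    have "(\<lambda>v. \<phi> v j) \<in> poly_fun" using assms by (auto simp: poly_maps_def)
    thus ?thesis
      using Inl poly_fun_compose[of "\<lambda>v. \<phi> v j" "\<lambda>z j. z (Inr j)"] by (auto simp: lift_vfield_def)
  qed (auto simp: lift_vfield_def)
qed

lemma dir_deriv_lift_vfield:
  "(\<lambda>i. dir_deriv (\<lambda>y. lift_vfield \<phi> y i) z (case_sum (\<lambda>j. 0) u)) = lift_vfield (map_deriv u \<phi>) z"
proof
  fix i show "dir_deriv (\<lambda>y. lift_vfield \<phi> y i) z (case_sum (\<lambda>j. 0) u) = lift_vfield (map_deriv u \<phi>) z i"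
  proof (cases i)
    case (Inl j)
    have "dir_deriv (\<lambda>y. lift_vfield \<phi> y i) z (case_sum (\<lambda>j. 0) u)
        = dir_deriv (\<lambda>x'. \<phi> x' j) (\<lambda>j. z (Inr j)) u"
      by (rule dir_deriv_cong_line) (simp add: lift_vfield_def Inl)
    thus ?thesis by (simp add: Inl map_deriv_def lift_vfield_def)
  qed (simp add: lift_vfield_def)
qed

lemma derivs_along_poly_fun:
  assumes "f \<in> poly_fun" "set \<phi>s \<subseteq> poly_maps"
  shows "derivs_along f \<phi>s \<in> poly_fun"
  using assms(2)
proof (induction \<phi>s)
  case Nil thus ?case using poly_fun_compose[OF assms(1), of "\<lambda>z j. z (Inl j)"] by auto
next
  case (Cons \<phi> \<phi>s)
  thus ?case using poly_fun_dir_deriv_vfield[OF Cons.IH poly_fun_lift_vfield] by simp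
qed

lemma derivs_along_update_poly_fun:
  assumes "f \<in> poly_fun" "set \<phi>s \<subseteq> poly_maps" "i < length \<phi>s"
  shows "derivs_along f (\<phi>s[i := map_deriv u (\<phi>s!i)]) \<in> poly_fun"
proof -
  have "map_deriv u (\<phi>s!i) \<in> poly_maps" using assms(2,3) map_deriv_poly_maps nth_mem by blast
  hence "set (\<phi>s[i := map_deriv u (\<phi>s ! i)]) \<subseteq> poly_maps"
    using assms(2) set_update_subset_insert by fastforce
  thus ?thesis using derivs_along_poly_fun assms(1) by blast
qed

lemma poly_fun_derivs_along_diagonal:
  fixes f :: "('v \<Rightarrow> 'k::field_char_0) \<Rightarrow> 'k"
  assumes "f \<in> poly_fun" "set \<phi>s \<subseteq> poly_maps"
  shows "(\<lambda>x. derivs_along f \<phi>s (case_sum x x)) \<in> poly_fun"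
proof (rule poly_fun_compose[OF derivs_along_poly_fun[OF assms]], rule allI)
  fix i show "(\<lambda>z::'v \<Rightarrow> 'k. case_sum z z i) \<in> poly_fun" by (cases i) auto
qed

lemma derivs_along_local:
  assumes "length \<phi>s = length \<psi>s"
    and "\<forall>i<length \<phi>s. (\<phi>s!i) (\<lambda>j. z (Inr j)) = (\<psi>s!i) (\<lambda>j. z (Inr j))"
  shows "derivs_along f \<phi>s z = derivs_along f \<psi>s z"
  using assms
proof (induction \<phi>s arbitrary: \<psi>s z)
  case (Cons \<phi> \<phi>s)
  then obtain \<psi> \<psi>s' where \<psi>s: "\<psi>s = \<psi> # \<psi>s'" by (cases \<psi>s) auto
  have "lift_vfield \<phi> z = lift_vfield \<psi> z"
    using Cons(3) \<psi>s by (force simp: lift_vfield_def)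
  moreover have "derivs_along f \<phi>s (\<lambda>i. z i + t * lift_vfield \<psi> z i)
     = derivs_along f \<psi>s' (\<lambda>i. z i + t * lift_vfield \<psi> z i)" for t
    by (rule Cons.IH) (use Cons(2,3) \<psi>s in \<open>force simp: lift_vfield_def\<close>)+
  ultimately show ?case using \<psi>s by (simp add: dir_deriv_cong_line)
qed simp

lemma dir_deriv_derivs_along_Inr:
  assumes "f \<in> poly_fun" "set \<phi>s \<subseteq> poly_maps"
  shows "dir_deriv (derivs_along f \<phi>s) z (case_sum (\<lambda>j. 0) u)
     = (\<Sum>i<length \<phi>s. derivs_along f (\<phi>s[i := map_deriv u (\<phi>s!i)]) z)"
  using assms(2)
proof (induction \<phi>s arbitrary: z)
  case Nil
  have "\<forall>t. poly [:f (\<lambda>j. z (Inl j)):] t = derivs_along f [] (\<lambda>i. z i + t * case_sum (\<lambda>j. 0) u i)"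
    by simp
  from dir_deriv_eqI[OF this] show ?case by simp
next
  case (Cons \<phi> \<phi>s)
  define b where "b = (case_sum (\<lambda>j. 0) u :: 'a + 'a \<Rightarrow> 'b)"
  have \<phi>: "\<phi> \<in> poly_maps" and \<phi>s: "set \<phi>s \<subseteq> poly_maps" using Cons by auto
  have poly_tail: "derivs_along f \<phi>s \<in> poly_fun" using derivs_along_poly_fun assms(1) \<phi>s by blast
  \<comment> \<open>the derivative falls either on \<open>f\<close>, handled by induction after commuting the two
     derivatives, or on the field \<open>\<phi>\<close>\<close>
  have "dir_deriv (\<lambda>y. dir_deriv (derivs_along f \<phi>s) y (lift_vfield \<phi> z)) z b
      = dir_deriv (\<lambda>y. dir_deriv (derivs_along f \<phi>s) y b) z (lift_vfield \<phi> z)"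
    using dir_deriv_commute[OF poly_tail] by blast
  also have "\<dots> = dir_deriv (\<lambda>y. \<Sum>i<length \<phi>s. derivs_along f (\<phi>s[i := map_deriv u (\<phi>s!i)]) y)
      z (lift_vfield \<phi> z)"
    using Cons.IH[OF \<phi>s] by (simp add: b_def)
  also have "\<dots> = (\<Sum>i<length \<phi>s. derivs_along f (\<phi> # \<phi>s[i := map_deriv u (\<phi>s!i)]) z)"
    by (subst dir_deriv_sum) (auto intro: derivs_along_update_poly_fun[OF assms(1) \<phi>s])
  finally have fixed_field: "dir_deriv (\<lambda>y. dir_deriv (derivs_along f \<phi>s) y (lift_vfield \<phi> z)) z b
      = (\<Sum>i<length \<phi>s. derivs_along f (\<phi> # \<phi>s[i := map_deriv u (\<phi>s!i)]) z)" .
  have "dir_deriv (derivs_along f (\<phi> # \<phi>s)) z b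
     = dir_deriv (\<lambda>y. dir_deriv (derivs_along f \<phi>s) y (lift_vfield \<phi> z)) z b
       + dir_deriv (derivs_along f \<phi>s) z (\<lambda>i. dir_deriv (\<lambda>y. lift_vfield \<phi> y i) z b)"
    using dir_deriv_variable_direction[OF poly_tail poly_fun_lift_vfield[OF \<phi>]] by simp
  also have "\<dots> = (\<Sum>i<length (\<phi> # \<phi>s). derivs_along f ((\<phi> # \<phi>s)[i := map_deriv u ((\<phi> # \<phi>s)!i)]) z)"
    unfolding fixed_field unfolding b_def dir_deriv_lift_vfield length_Cons sum.lessThan_Suc_shift
    by simp
  finally show ?case by (simp only: b_def)
qed

lemma dir_deriv_derivs_along_diagonal:
  assumes "f \<in> poly_fun" "set \<phi>s \<subseteq> poly_maps"
  shows "dir_deriv (\<lambda>x. derivs_along f \<phi>s (case_sum x x)) x w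
    = derivs_along f ((\<lambda>_. w) # \<phi>s) (case_sum x x)
      + (\<Sum>i<length \<phi>s. derivs_along f (\<phi>s[i := map_deriv w (\<phi>s!i)]) (case_sum x x))"
proof -
  have poly: "derivs_along f \<phi>s \<in> poly_fun" using derivs_along_poly_fun assms by blast
  have "dir_deriv (\<lambda>x. derivs_along f \<phi>s (case_sum x x)) x w
      = dir_deriv (derivs_along f \<phi>s) (case_sum x x) (case_sum w w)"
  proof (rule dir_deriv_cong_line, rule allI)
    fix t
    have "case_sum (\<lambda>i. x i + t * w i) (\<lambda>i. x i + t * w i) = (\<lambda>i. case_sum x x i + t * case_sum w w i)"
      by (rule ext) (simp split: sum.split)
    thus "derivs_along f \<phi>s (case_sum (\<lambda>i. x i + t * w i) (\<lambda>i. x i + t * w i))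
        = derivs_along f \<phi>s (\<lambda>i. case_sum x x i + t * case_sum w w i)"
      by simp
  qed
  also have "case_sum w w = (\<lambda>i. 1 * case_sum w (\<lambda>j. 0) i + case_sum (\<lambda>j. 0) w i)"
    by (rule ext) (simp split: sum.split)
  also have "dir_deriv (derivs_along f \<phi>s) (case_sum x x) \<dots>
      = dir_deriv (derivs_along f \<phi>s) (case_sum x x) (case_sum w (\<lambda>j. 0))
      + dir_deriv (derivs_along f \<phi>s) (case_sum x x) (case_sum (\<lambda>j. 0) w)"
    by (rule trans[OF dir_deriv_linear_direction[OF poly]]) simp
  finally show ?thesis using dir_deriv_derivs_along_Inr[OF assms] by (simp add: lift_vfield_def)
qed

lemma derivs_along_replicate:
  "derivs_along f (replicate d \<phi>) (case_sum y x) = dir_deriv_pow d (\<phi> x) f y"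
proof (induction d arbitrary: y)
  case 0 thus ?case by (simp add: sum.case_eq_if)
next
  case (Suc d)
  have "derivs_along f (replicate (Suc d) \<phi>) (case_sum y x)
     = dir_deriv (derivs_along f (replicate d \<phi>)) (case_sum y x) (case_sum (\<phi> x) (\<lambda>j. 0))"
    by (simp add: lift_vfield_def)
  also have "\<dots> = dir_deriv (dir_deriv_pow d (\<phi> x) f) y (\<phi> x)"
  proof (rule dir_deriv_cong_line, rule allI)
    fix t
    have "(\<lambda>i. case_sum y x i + t * case_sum (\<phi> x) (\<lambda>j. 0) i) = case_sum (\<lambda>i. y i + t * \<phi> x i) x"
      by (rule ext) (simp split: sum.split)
    thus "derivs_along f (replicate d \<phi>) (\<lambda>i. case_sum y x i + t * case_sum (\<phi> x) (\<lambda>j. 0) i)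
        = dir_deriv_pow d (\<phi> x) f (\<lambda>i. y i + t * \<phi> x i)"
      using Suc by simp
  qed
  finally show ?case by simp
qed

section \<open>Linear algebra in \<open>k\<^sup>n\<close>\<close>

definition scale_fun :: "'k::field \<Rightarrow> ('n \<Rightarrow> 'k) \<Rightarrow> ('n \<Rightarrow> 'k)" where
  "scale_fun c f = (\<lambda>i. c * f i)"

interpretation V: vector_space "scale_fun :: 'k::field \<Rightarrow> ('n \<Rightarrow> 'k) \<Rightarrow> ('n \<Rightarrow> 'k)"
  by unfold_locales (auto simp: scale_fun_def algebra_simps)

interpretation VK: vector_space_pair "scale_fun :: 'k::field \<Rightarrow> ('n \<Rightarrow> 'k) \<Rightarrow> ('n \<Rightarrow> 'k)"
  "(*) :: 'k \<Rightarrow> 'k \<Rightarrow> 'k"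
  by unfold_locales (auto simp: algebra_simps)

abbreviation linear_functional :: "(('n \<Rightarrow> 'k::field) \<Rightarrow> 'k) \<Rightarrow> bool" where
  "linear_functional \<equiv> Vector_Spaces.linear scale_fun (*)"

definition std_basis :: "'n \<Rightarrow> ('n \<Rightarrow> 'k::field)" where
  "std_basis j = (\<lambda>i. if i = j then 1 else 0)"

lemma sum_fun_apply: "(\<Sum>j\<in>S. f j) i = (\<Sum>j\<in>S. f j i)"
  by (induction S rule: infinite_finite_induct) auto

lemma std_basis_expansion: "(x :: 'n::finite \<Rightarrow> 'k::field) = (\<Sum>j\<in>UNIV. scale_fun (x j) (std_basis j))"
proof
  fix i
  have "(\<Sum>j\<in>UNIV. scale_fun (x j) (std_basis j)) i = (\<Sum>j\<in>UNIV. if j = i then x j else 0)"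
    unfolding sum_fun_apply by (rule sum.cong) (auto simp: scale_fun_def std_basis_def)
  thus "x i = (\<Sum>j\<in>UNIV. scale_fun (x j) (std_basis j)) i" by simp
qed

interpretation V_fin: finite_dimensional_vector_space
  "scale_fun :: 'k::field \<Rightarrow> ('n::finite \<Rightarrow> 'k) \<Rightarrow> ('n \<Rightarrow> 'k)" "range std_basis"
proof unfold_locales
  show "finite (range (std_basis :: 'n \<Rightarrow> 'n \<Rightarrow> 'k))" by simp
next
  show "V.independent (range (std_basis :: 'n \<Rightarrow> 'n \<Rightarrow> 'k))"
    unfolding V.dependent_def
  proof
    assume "\<exists>a\<in>range (std_basis :: 'n \<Rightarrow> 'n \<Rightarrow> 'k). a \<in> V.span (range std_basis - {a})"
    then obtain j where j: "(std_basis j :: 'n \<Rightarrow> 'k) \<in> V.span (range std_basis - {std_basis j})"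
      by blast
    have "V.subspace {x :: 'n \<Rightarrow> 'k. x j = 0}"
      by (auto simp: V.subspace_def scale_fun_def)
    moreover have "range std_basis - {std_basis j} \<subseteq> {x :: 'n \<Rightarrow> 'k. x j = 0}"
      by (auto simp: std_basis_def)
    ultimately have "V.span (range std_basis - {std_basis j}) \<subseteq> {x :: 'n \<Rightarrow> 'k. x j = 0}"
      using V.span_minimal by blast
    with j show False by (auto simp: std_basis_def)
  qed
next
  have "x \<in> V.span (range std_basis)" for x :: "'n \<Rightarrow> 'k"
    by (subst std_basis_expansion) (intro V.span_sum V.span_scale V.span_base; simp)
  thus "V.span (range (std_basis :: 'n \<Rightarrow> 'n \<Rightarrow> 'k)) = UNIV"
    by auto
qed

lemma linear_functional_expansion:
  fixes l :: "('n::finite \<Rightarrow> 'k::field) \<Rightarrow> 'k"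
  assumes "linear_functional l"
  shows "l x = (\<Sum>j\<in>UNIV. x j * l (std_basis j))"
  by (subst std_basis_expansion)
    (simp add: VK.linear_sum[OF assms] VK.linear_scale[OF assms])

lemma linear_functional_poly_fun:
  fixes l :: "('n::finite \<Rightarrow> 'k::field_char_0) \<Rightarrow> 'k"
  assumes "linear_functional l"
  shows "l \<in> poly_fun"
proof -
  have "l = (\<lambda>x. \<Sum>j\<in>UNIV. x j * l (std_basis j))"
    using linear_functional_expansion[OF assms] by (rule ext)
  also have "\<dots> \<in> poly_fun" by (rule poly_fun_sum) auto
  finally show ?thesis .
qed

lemma subspace_separating_functional:
  fixes W :: "('n \<Rightarrow> 'k::field) set"
  assumes "V.subspace W" "u \<notin> W"
  shows "\<exists>l. linear_functional l \<and> (\<forall>w\<in>W. l w = 0) \<and> l u = 1"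
proof -
  obtain B where B: "B \<subseteq> W" "V.independent B" "W \<subseteq> V.span B"
    by (rule V.basis_exists)
  have "u \<notin> V.span B" using V.span_minimal[OF B(1) assms(1)] assms(2) by blast
  hence "V.independent (insert u B)" using V.independent_insertI B(2) by blast
  then obtain l where l: "linear_functional l" "\<forall>x\<in>insert u B. l x = (if x = u then 1 else 0)"
    using VK.linear_independent_extend[of "insert u B" "\<lambda>x. if x = u then 1 else 0"] by blast
  have "\<forall>x\<in>B. l x = 0" using l(2) B(1) assms(2) by auto
  hence "\<forall>w\<in>W. l w = 0" using VK.linear_eq_0_on_span[OF l(1)] B(3) by blast
  thus ?thesis using l by auto
qed

lemma subspace_zariski_closed:
  fixes W :: "('n::finite \<Rightarrow> 'k::field_char_0) set"
  assumes "V.subspace W"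
  shows "zariski_closed W"
  unfolding zariski_closed_def
proof (intro exI conjI)
  let ?F = "{l. linear_functional l \<and> (\<forall>w\<in>W. l w = 0)}"
  show "?F \<subseteq> poly_fun" using linear_functional_poly_fun by blast
  show "W = {u. \<forall>l\<in>?F. l u = 0}"
    using subspace_separating_functional[OF assms] by fastforce
qed

lemma coeffs_in_subspace:
  fixes p :: "'n::finite \<Rightarrow> 'k::field_char_0 poly"
  assumes "V.subspace W" "\<forall>s. (\<lambda>k. poly (p k) s) \<in> W"
  shows "(\<lambda>k. coeff (p k) j) \<in> W"
proof (rule ccontr)
  assume "(\<lambda>k. coeff (p k) j) \<notin> W"
  then obtain l where l: "linear_functional l" "\<forall>w\<in>W. l w = 0" "l (\<lambda>k. coeff (p k) j) = 1"
    using subspace_separating_functional[OF assms(1)] by blast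
  define q where "q = (\<Sum>k\<in>UNIV. Polynomial.smult (l (std_basis k)) (p k))"
  have "poly q s = l (\<lambda>k. poly (p k) s)" for s
    by (simp add: q_def poly_sum linear_functional_expansion[OF l(1), of "\<lambda>k. poly (p k) s"] mult.commute)
  hence "q = 0" using assms(2) l(2) poly_all_0_iff_0 by metis
  moreover have "coeff q j = l (\<lambda>k. coeff (p k) j)"
    by (simp add: q_def coeff_sum linear_functional_expansion[OF l(1), of "\<lambda>k. coeff (p k) j"] mult.commute)
  ultimately show False using l(3) by simp
qed

lemma subspace_coordinates:
  fixes W :: "('n::finite \<Rightarrow> 'k::field) set"
  assumes "V.subspace W"
  obtains m :: nat and b lf where "\<forall>j<m. b j \<in> W" "\<forall>i. linear_functional (lf i)"
    "\<forall>i<m. \<forall>j<m. lf i (b j) = (if i = j then 1 else 0)"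
    "\<forall>x\<in>W. (\<forall>i<m. lf i x = 0) \<longrightarrow> x = 0"
proof -
  obtain B where B: "B \<subseteq> W" "V.independent B" "W \<subseteq> V.span B"
    by (rule V.basis_exists)
  have "finite B" using V_fin.finiteI_independent[OF B(2)] .
  then obtain bs where bs: "distinct bs" "set bs = B" using finite_distinct_list by blast
  have "\<forall>i. \<exists>l. linear_functional l \<and> (\<forall>x\<in>B. l x = (if x = bs!i then 1 else 0))"
    by (intro allI VK.linear_independent_extend[OF B(2)])
  then obtain lf where lf: "\<forall>i. linear_functional (lf i)"
    and lf_B: "\<forall>i. \<forall>x\<in>B. lf i x = (if x = bs!i then 1 else 0)"
    by metis
  have dual: "\<forall>i<length bs. \<forall>j<length bs. lf i (bs!j) = (if i = j then 1 else 0)"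
    using lf_B bs by (auto simp: nth_eq_iff_index_eq)
  have unique: "x = 0" if x: "x \<in> W" "\<forall>i<length bs. lf i x = 0" for x
  proof -
    obtain a where a: "x = (\<Sum>c\<in>B. scale_fun (a c) c)"
      using x(1) B(3) V.span_finite[OF \<open>finite B\<close>] by blast
    have "a c = 0" if "c \<in> B" for c
    proof -
      have "c \<in> set bs" using that bs(2) by simp
      then obtain i where i: "i < length bs" "c = bs!i" by (auto simp: in_set_conv_nth)
      have "lf i x = (\<Sum>c'\<in>B. a c' * lf i c')"
        unfolding a VK.linear_sum[OF lf[rule_format]] VK.linear_scale[OF lf[rule_format]] ..
      also have "\<dots> = (\<Sum>c'\<in>B. if c' = c then a c' else 0)"
        by (rule sum.cong[OF refl]) (simp add: lf_B i(2))
      also have "\<dots> = a c" using that \<open>finite B\<close> by simp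
      finally show ?thesis using x(2) i(1) by simp
    qed
    hence "\<forall>c\<in>B. scale_fun (a c) c = 0" by (simp add: scale_fun_def zero_fun_def)
    thus ?thesis unfolding a by (rule sum.neutral)
  qed
  show ?thesis
  proof (rule that[of "length bs" "(!) bs" lf])
    show "\<forall>j<length bs. bs ! j \<in> W" using B(1) bs(2) nth_mem by blast
  qed (use lf dual unique in blast)+
qed

lemma det_nonzero_solvable:
  fixes A :: "'a::field mat"
  assumes "A \<in> carrier_mat n n" "det A \<noteq> 0" "t \<in> carrier_vec n"
  shows "\<exists>c \<in> carrier_vec n. A *\<^sub>v c = t"
proof -
  obtain B where B: "B \<in> carrier_mat n n" "A * B = 1\<^sub>m n"
    using det_non_zero_imp_unit[OF assms(1,2), unfolded Units_def, of "()"]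
    by (auto simp: ring_mat_def)
  have "A *\<^sub>v (B *\<^sub>v t) = (A * B) *\<^sub>v t" using assms(1,3) B(1) by simp
  thus ?thesis using B assms(3) by (intro bexI[of _ "B *\<^sub>v t"]) auto
qed

lemma poly_fun_det:
  assumes "\<forall>i j. a i j \<in> poly_fun"
  shows "(\<lambda>w. det (mat m m (\<lambda>(i, j). a i j w))) \<in> poly_fun"
proof -
  let ?Perm = "{p. p permutes {0..<m}}"
  have "det (mat m m (\<lambda>(i, j). a i j w))
      = (\<Sum>p\<in>?Perm. signof p * (\<Prod>i\<in>{0..<m}. a i (p i) w))" for w
    unfolding det_def'[OF mat_carrier]
    by (intro sum.cong refl arg_cong2[where f = "(*)"] prod.cong)
      (auto dest: permutes_in_image)
  moreover have "(\<lambda>w. \<Sum>p\<in>?Perm. signof p * (\<Prod>i\<in>{0..<m}. a i (p i) w)) \<in> poly_fun"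
    using assms by (intro poly_fun_sum ballI poly_fun.mult poly_fun.const poly_fun_prod) auto
  ultimately show ?thesis by simp
qed

section \<open>Orbits of a semigroup subspace\<close>

lemma orbit_E_memI: "\<phi> \<in> E \<Longrightarrow> \<phi> v \<in> orbit_E E v"
  unfolding orbit_E_def by blast

lemma orbit_E_memE:
  assumes "u \<in> orbit_E E v"
  obtains \<phi> where "\<phi> \<in> E" "u = \<phi> v"
  using assms unfolding orbit_E_def by blast

lemma orbit_E_subset_if_E_stable: "E_stable E Z \<Longrightarrow> v \<in> Z \<Longrightarrow> orbit_E E v \<subseteq> Z"
  unfolding E_stable_def by (blast elim: orbit_E_memE)

context
  fixes E :: "(('n \<Rightarrow> 'k::field) \<Rightarrow> ('n \<Rightarrow> 'k)) set"
  assumes E: "semigroup_subspace E"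
begin

lemma semigroup_subspace_poly_maps: "E \<subseteq> poly_maps"
  and semigroup_subspace_id: "id \<in> E"
  and semigroup_subspace_comp: "\<phi> \<in> E \<Longrightarrow> \<psi> \<in> E \<Longrightarrow> \<phi> \<circ> \<psi> \<in> E"
  and semigroup_subspace_add: "\<phi> \<in> E \<Longrightarrow> \<psi> \<in> E \<Longrightarrow> (\<lambda>v i. \<phi> v i + \<psi> v i) \<in> E"
  and semigroup_subspace_scale: "\<phi> \<in> E \<Longrightarrow> (\<lambda>v i. c * \<phi> v i) \<in> E"
  using E unfolding semigroup_subspace_def by auto

lemma semigroup_subspace_lincomb:
  assumes "finite S" "\<forall>j\<in>S. \<phi> j \<in> E"
  shows "(\<lambda>x k. \<Sum>j\<in>S. a j * \<phi> j x k) \<in> E"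
  using assms
proof (induction S rule: finite_induct)
  case empty
  thus ?case using E by (simp add: semigroup_subspace_def)
next
  case (insert j S)
  thus ?case using semigroup_subspace_add[OF semigroup_subspace_scale] by simp
qed

lemma semigroup_subspace_id_plus: "\<psi> \<in> E \<Longrightarrow> (\<lambda>v i. v i + s * \<psi> v i) \<in> E"
  using semigroup_subspace_add[OF semigroup_subspace_id semigroup_subspace_scale] by simp

lemma orbit_E_self: "v \<in> orbit_E E v"
  using orbit_E_memI[OF semigroup_subspace_id] by simp

lemma orbit_E_mono:
  assumes "w \<in> orbit_E E v"
  shows "orbit_E E w \<subseteq> orbit_E E v"
proof
  fix x assume "x \<in> orbit_E E w"
  then obtain \<phi> where \<phi>: "\<phi> \<in> E" "x = \<phi> w" by (rule orbit_E_memE)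
  obtain \<psi> where \<psi>: "\<psi> \<in> E" "w = \<psi> v" using assms by (rule orbit_E_memE)
  show "x \<in> orbit_E E v"
    using orbit_E_memI[OF semigroup_subspace_comp[OF \<phi>(1) \<psi>(1)]] \<phi>(2) \<psi>(2) by simp
qed

lemma orbit_E_stable: "E_stable E (orbit_E E v)"
  unfolding E_stable_def
proof (intro ballI image_subsetI)
  fix \<phi> x assume "\<phi> \<in> E" "x \<in> orbit_E E v"
  thus "\<phi> x \<in> orbit_E E v" using orbit_E_mono orbit_E_memI by blast
qed

lemma orbit_E_subspace: "V.subspace (orbit_E E v)"
  unfolding V.subspace_def orbit_E_def
proof (intro conjI ballI allI)
  show "0 \<in> {\<phi> v |\<phi>. \<phi> \<in> E}"
    using E unfolding semigroup_subspace_def zero_fun_def by force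
  show "x + y \<in> {\<phi> v |\<phi>. \<phi> \<in> E}" if "x \<in> {\<phi> v |\<phi>. \<phi> \<in> E}" "y \<in> {\<phi> v |\<phi>. \<phi> \<in> E}" for x y
    using that semigroup_subspace_add unfolding plus_fun_def by fastforce
  show "scale_fun c x \<in> {\<phi> v |\<phi>. \<phi> \<in> E}" if "x \<in> {\<phi> v |\<phi>. \<phi> \<in> E}" for c x
    using that semigroup_subspace_scale unfolding scale_fun_def by fastforce
qed

end

lemma map_deriv_in_orbit:
  fixes E :: "(('n::finite \<Rightarrow> 'k::field_char_0) \<Rightarrow> ('n \<Rightarrow> 'k)) set"
  assumes E: "semigroup_subspace E" and "\<phi> \<in> E" "\<psi> \<in> E"
  shows "map_deriv (\<psi> x) \<phi> x \<in> orbit_E E x"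
proof -
  have "\<forall>k. \<exists>p. \<forall>t. poly p t = \<phi> (\<lambda>i. x i + t * \<psi> x i) k"
  proof
    fix k
    have "(\<lambda>v. \<phi> v k) \<in> poly_fun"
      using assms(2) semigroup_subspace_poly_maps[OF E] by (auto simp: poly_maps_def)
    thus "\<exists>p. \<forall>t. poly p t = \<phi> (\<lambda>i. x i + t * \<psi> x i) k" by (rule poly_fun_restrict_line)
  qed
  then obtain p where p: "\<forall>k t. poly (p k) t = \<phi> (\<lambda>i. x i + t * \<psi> x i) k" by metis
  have "map_deriv (\<psi> x) \<phi> x = (\<lambda>k. coeff (p k) 1)"
    unfolding map_deriv_def using p by (intro ext dir_deriv_eqI) simp
  moreover have "(\<lambda>k. poly (p k) s) \<in> orbit_E E x" for s
  proof -
    have "\<phi> \<circ> (\<lambda>v i. v i + s * \<psi> v i) \<in> E"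
      using semigroup_subspace_comp[OF E assms(2) semigroup_subspace_id_plus[OF E assms(3)]] .
    thus ?thesis using orbit_E_memI p by fastforce
  qed
  ultimately show ?thesis using coeffs_in_subspace[OF orbit_E_subspace[OF E]] by simp
qed

section \<open>Invariant subvarieties\<close>

lemma E_stable_imp_D_invariant:
  fixes E :: "(('n::finite \<Rightarrow> 'k::field_char_0) \<Rightarrow> ('n \<Rightarrow> 'k)) set"
  assumes E: "semigroup_subspace E" and "zariski_closed Y" and stable: "E_stable E Y"
  shows "D_invariant E Y"
  unfolding D_invariant_def
proof (intro conjI ballI assms(2))
  fix y \<xi> assume y: "y \<in> Y" and "\<xi> \<in> vfields E"
  then have \<xi>: "\<xi> \<in> E" by (simp add: vfields_def)
  show "\<xi> y \<in> tangent_space Y y" unfolding tangent_space_def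
  proof (intro CollectI ballI impI)
    fix f assume "f \<in> poly_fun" and f: "\<forall>x\<in>Y. f x = 0"
    have "(\<lambda>i. y i + t * \<xi> y i) \<in> Y" for t
    proof -
      have "(\<lambda>v i. v i + t * \<xi> v i) ` Y \<subseteq> Y"
        using stable semigroup_subspace_id_plus[OF E \<xi>] unfolding E_stable_def by (rule bspec)
      thus ?thesis using y by blast
    qed
    hence "\<forall>t. poly 0 t = f (\<lambda>i. y i + t * \<xi> y i)" using f by simp
    from dir_deriv_eqI[OF this] show "dir_deriv f y (\<xi> y) = 0" by simp
  qed
qed

lemma D_invariant_dir_deriv_zero:
  assumes "D_invariant E Z" "g \<in> poly_fun" "\<forall>x\<in>Z. g x = 0" "x \<in> Z" "\<psi> \<in> E"
  shows "dir_deriv g x (\<psi> x) = 0"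
  using assms unfolding D_invariant_def tangent_space_def vfields_def by auto

lemma derivs_along_vanish_on_invariant:
  fixes E :: "(('n::finite \<Rightarrow> 'k::field_char_0) \<Rightarrow> ('n \<Rightarrow> 'k)) set"
  assumes E: "semigroup_subspace E" and Z: "D_invariant E Z"
    and f: "f \<in> poly_fun" "\<forall>x\<in>Z. f x = 0"
  shows "set \<phi>s \<subseteq> E \<Longrightarrow> x \<in> Z \<Longrightarrow> derivs_along f \<phi>s (case_sum x x) = 0"
proof (induction "length \<phi>s" arbitrary: \<phi>s x)
  case 0 thus ?case using f by simp
next
  case (Suc n)
  then obtain \<psi> \<phi>s' where \<phi>s: "\<phi>s = \<psi> # \<phi>s'" by (cases \<phi>s) auto
  have len: "length \<phi>s' = n" and \<phi>s'_E: "set \<phi>s' \<subseteq> E" and \<psi>: "\<psi> \<in> E"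
    using Suc \<phi>s by auto
  have \<phi>s'_poly: "set \<phi>s' \<subseteq> poly_maps" using \<phi>s'_E semigroup_subspace_poly_maps[OF E] by blast
  have "dir_deriv (\<lambda>x. derivs_along f \<phi>s' (case_sum x x)) x (\<psi> x) = 0"
    by (rule D_invariant_dir_deriv_zero[OF Z poly_fun_derivs_along_diagonal[OF f(1) \<phi>s'_poly] _ Suc(4) \<psi>])
      (use Suc(1)[OF len[symmetric] \<phi>s'_E] in simp)
  moreover have "derivs_along f (\<phi>s'[i := map_deriv (\<psi> x) (\<phi>s'!i)]) (case_sum x x) = 0"
    if i: "i < length \<phi>s'" for i
    \<comment> \<open>at \<open>x\<close> the updated field agrees with some \<open>\<chi> \<in> E\<close>, so the induction hypothesis applies\<close>
  proof -
    have "map_deriv (\<psi> x) (\<phi>s'!i) x \<in> orbit_E E x"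
      by (rule map_deriv_in_orbit[OF E _ \<psi>]) (use \<phi>s'_E i nth_mem in blast)
    then obtain \<chi> where \<chi>: "\<chi> \<in> E" "map_deriv (\<psi> x) (\<phi>s'!i) x = \<chi> x"
      by (rule orbit_E_memE)
    have "set (\<phi>s'[i := \<chi>]) \<subseteq> E" using \<phi>s'_E \<chi>(1) set_update_subset_insert by fastforce
    hence "derivs_along f (\<phi>s'[i := \<chi>]) (case_sum x x) = 0"
      using Suc(1) len Suc(4) by simp
    moreover have "derivs_along f (\<phi>s'[i := map_deriv (\<psi> x) (\<phi>s'!i)]) (case_sum x x)
        = derivs_along f (\<phi>s'[i := \<chi>]) (case_sum x x)"
      by (rule derivs_along_local) (use \<chi> i in \<open>auto simp: nth_list_update\<close>)
    ultimately show ?thesis by simp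
  qed
  moreover have "derivs_along f ((\<lambda>_. \<psi> x) # \<phi>s') (case_sum x x) = derivs_along f \<phi>s (case_sum x x)"
    by (rule derivs_along_local) (auto simp: \<phi>s nth_Cons split: nat.split)
  ultimately show ?case
    using dir_deriv_derivs_along_diagonal[OF f(1) \<phi>s'_poly, of x "\<psi> x"] by simp
qed

lemma D_invariant_imp_E_stable:
  fixes E :: "(('n::finite \<Rightarrow> 'k::field_char_0) \<Rightarrow> ('n \<Rightarrow> 'k)) set"
  assumes E: "semigroup_subspace E" and Z: "D_invariant E Z"
  shows "E_stable E Z"
  unfolding E_stable_def
proof (intro ballI image_subsetI)
  fix \<phi> x assume \<phi>: "\<phi> \<in> E" and x: "x \<in> Z"
  obtain F where F: "F \<subseteq> poly_fun" "Z = {v. \<forall>f\<in>F. f v = 0}"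
    using Z by (auto simp: D_invariant_def zariski_closed_def)
  define \<psi> where "\<psi> = (\<lambda>v i. \<phi> v i - v i)"
  have \<psi>: "\<psi> \<in> E"
    using semigroup_subspace_add[OF E semigroup_subspace_scale[OF E semigroup_subspace_id[OF E],
          where c = "-1"] \<phi>]
    by (simp add: \<psi>_def)
  have "f (\<phi> x) = 0" if "f \<in> F" for f
  proof -
    have f: "f \<in> poly_fun" "\<forall>z\<in>Z. f z = 0" using F that by auto
    have "derivs_along f (replicate d \<psi>) (case_sum x x) = 0" for d
      by (rule derivs_along_vanish_on_invariant[OF E Z f]) (use \<psi> x in auto)
    hence "f (\<lambda>i. x i + \<psi> x i) = 0"
      using zero_if_all_dir_deriv_pow_zero[OF f(1)] by (simp add: derivs_along_replicate)
    thus ?thesis by (simp add: \<psi>_def)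
  qed
  thus "\<phi> x \<in> Z" using F by simp
qed

section \<open>The orbit is locally constant\<close>

lemma orbit_E_eq_if_det_nonzero:
  fixes E :: "(('n::finite \<Rightarrow> 'k::field) \<Rightarrow> ('n \<Rightarrow> 'k)) set"
  assumes E: "semigroup_subspace E" and \<phi>: "\<forall>j. \<phi> j \<in> E"
    and lf: "\<forall>i. linear_functional (lf i)"
    and coords: "\<forall>x\<in>orbit_E E v. (\<forall>i<m. lf i x = 0) \<longrightarrow> x = 0"
    and w: "w \<in> orbit_E E v" and det: "det (mat m m (\<lambda>(i, j). lf i (\<phi> j w))) \<noteq> 0"
  shows "orbit_E E w = orbit_E E v"
proof -
  let ?P = "mat m m (\<lambda>(i, j). lf i (\<phi> j w))"
  obtain c where c: "c \<in> carrier_vec m" "?P *\<^sub>v c = vec m (\<lambda>i. lf i v)"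
    using det_nonzero_solvable[of ?P m "vec m (\<lambda>i. lf i v)"] det by auto
  define \<chi> where "\<chi> x k = (\<Sum>j\<in>{0..<m}. c $ j * \<phi> j x k)" for x k
  have \<chi>: "\<chi> \<in> E" unfolding \<chi>_def using semigroup_subspace_lincomb[OF E] \<phi> by auto
  have "\<chi> w = (\<Sum>j\<in>{0..<m}. scale_fun (c $ j) (\<phi> j w))"
    by (auto simp: \<chi>_def sum_fun_apply scale_fun_def)
  hence "lf i (\<chi> w) = (?P *\<^sub>v c) $ i" if "i < m" for i
    using that c(1) lf by (simp add: VK.linear_sum VK.linear_scale scalar_prod_def mult.commute)
  hence "lf i (\<chi> w - v) = 0" if "i < m" for i
    using that c(2) lf by (simp add: VK.linear_diff)
  moreover have "\<chi> w - v \<in> orbit_E E v"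
    using V.subspace_diff[OF orbit_E_subspace[OF E]] orbit_E_mono[OF E w] orbit_E_memI[OF \<chi>]
      orbit_E_self[OF E] by blast
  ultimately have "\<chi> w = v" using coords by force
  hence "v \<in> orbit_E E w" using orbit_E_memI[OF \<chi>] by metis
  thus ?thesis using orbit_E_mono[OF E] w by blast
qed

lemma orbit_E_locally_constant:
  fixes E :: "(('n::finite \<Rightarrow> 'k::field_char_0) \<Rightarrow> ('n \<Rightarrow> 'k)) set"
  assumes E: "semigroup_subspace E"
  shows "\<exists>U. zariski_open_in (orbit_E E v) U \<and> v \<in> U \<and> (\<forall>w\<in>U. orbit_E E w = orbit_E E v)"
proof -
  obtain m :: nat and b lf where b: "\<forall>j<m. b j \<in> orbit_E E v" and lf: "\<forall>i. linear_functional (lf i)"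
    and dual: "\<forall>i<m. \<forall>j<m. lf i (b j) = (if i = j then 1 else 0)"
    and coords: "\<forall>x\<in>orbit_E E v. (\<forall>i<m. lf i x = 0) \<longrightarrow> x = 0"
    by (rule subspace_coordinates[OF orbit_E_subspace[OF E]])
  have "\<exists>\<phi>\<in>E. j < m \<longrightarrow> b j = \<phi> v" for j
  proof (cases "j < m")
    case True
    then obtain \<phi> where "\<phi> \<in> E" "b j = \<phi> v" using b by (metis orbit_E_memE)
    thus ?thesis by blast
  qed (use semigroup_subspace_id[OF E] in blast)
  then obtain \<phi> where \<phi>: "\<forall>j. \<phi> j \<in> E" and \<phi>_v: "\<forall>j<m. b j = \<phi> j v" by metis
  define P where "P w = mat m m (\<lambda>(i, j). lf i (\<phi> j w))" for w
  define U where "U = orbit_E E v - {w. det (P w) = 0}"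
  have "\<forall>k. (\<lambda>w. \<phi> j w k) \<in> poly_fun" for j
    using \<phi> semigroup_subspace_poly_maps[OF E] by (auto simp: poly_maps_def)
  hence "(\<lambda>w. lf i (\<phi> j w)) \<in> poly_fun" for i j
    by (rule poly_fun_compose[OF linear_functional_poly_fun[OF lf[rule_format]]])
  hence "(\<lambda>w. det (P w)) \<in> poly_fun" unfolding P_def by (intro poly_fun_det) blast
  hence "zariski_closed {w. det (P w) = 0}"
    unfolding zariski_closed_def by (intro exI[of _ "{\<lambda>w. det (P w)}"]) auto
  hence "zariski_open_in (orbit_E E v) U" unfolding zariski_open_in_def U_def by blast
  moreover have "P v = 1\<^sub>m m" by (rule eq_matI) (auto simp: P_def \<phi>_v[rule_format, symmetric] dual)
  hence "v \<in> U" unfolding U_def using orbit_E_self[OF E] by simp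
  moreover have "\<forall>w\<in>U. orbit_E E w = orbit_E E v"
    using orbit_E_eq_if_det_nonzero[OF E \<phi> lf coords] unfolding U_def P_def by blast
  ultimately show ?thesis by blast
qed

theorem lemma3p2p1:
  fixes E :: "(('n::finite \<Rightarrow> 'k::field_char_0) \<Rightarrow> ('n \<Rightarrow> 'k)) set"
  assumes "alg_closed TYPE('k)"
    and "semigroup_subspace E"
  shows "(\<forall>v. is_M E v (orbit_E E v) \<and> vfields_at E v = orbit_E E v)
    \<and> (\<forall>Y. zariski_closed Y \<longrightarrow> (D_invariant E Y \<longleftrightarrow> E_stable E Y))
    \<and> (\<forall>v. \<exists>U. zariski_open_in (orbit_E E v) U \<and> v \<in> U \<and> (\<forall>w\<in>U. orbit_E E w = orbit_E E v))"
proof (intro conjI allI impI)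
  note E = assms(2)
  fix v
  have "D_invariant E (orbit_E E v)"
    using E_stable_imp_D_invariant[OF E subspace_zariski_closed orbit_E_stable]
      orbit_E_subspace E by blast
  moreover have "orbit_E E v \<subseteq> Z" if "D_invariant E Z" "v \<in> Z" for Z
    using orbit_E_subset_if_E_stable D_invariant_imp_E_stable[OF E] that by blast
  ultimately show "is_M E v (orbit_E E v)"
    unfolding is_M_def using orbit_E_self[OF E] by blast
  show "vfields_at E v = orbit_E E v"
    unfolding vfields_at_def vfields_def orbit_E_def by auto
next
  fix Y :: "('n \<Rightarrow> 'k) set"
  assume "zariski_closed Y"
  thus "D_invariant E Y \<longleftrightarrow> E_stable E Y"
    using D_invariant_imp_E_stable E_stable_imp_D_invariant assms(2) by blast
next
  fix v :: "'n \<Rightarrow> 'k"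
  show "\<exists>U. zariski_open_in (orbit_E E v) U \<and> v \<in> U \<and> (\<forall>w\<in>U. orbit_E E w = orbit_E E v)"
    using orbit_E_locally_constant[OF assms(2)] .
qed

end
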